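(* Let $n\ge1$ and let $J\subset S$ be a homogeneous ideal. Suppose that for some $m>0$, $J_m$ is nonzero and spanned by an initial segment of degree-$m$ monomials with respect to the degree reverse lexicographic order. If $J_{m'}\neq0$ for some $m'<m$ (i.e. $J$ is not generated in degrees $\ge m$), then the Hilbert polynomial of $S/J$ is constant.
   Context: $S=k[x_0,\dots,x_n]=\bigoplus_m S_m$ over an algebraically closed field $k$ of characteristic zero. The degree reverse lexicographic order with $x_0\succ\cdots\succ x_n$: for monomials of the same degree, $x^\alpha\succ x^\beta$ iff the last nonzero entry of $\alpha-\beta$ is negative. An initial segment of degree $t$ is the set of the first $\ell$ monomials of degree $t$ in this order, for some $\ell$. *)

theory Defs
  imports Main "HOL-Library.Poly_Mapping" "HOL-Computational_Algebra.Polynomial"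
begin

text \<open>Polynomials in the variables x_0, x_1, ... over a field 'k: finitely supported maps
  from exponent vectors (finitely supported nat => nat) to coefficients.
  The ring S = k[x_0,...,x_n] is the set of those polynomials involving only x_0..x_n.\<close>

type_synonym 'k mpoly = "(nat \<Rightarrow>\<^sub>0 nat) \<Rightarrow>\<^sub>0 'k"

definition mdeg :: "(nat \<Rightarrow>\<^sub>0 nat) \<Rightarrow> nat" where
  "mdeg \<alpha> = (\<Sum>i\<in>Poly_Mapping.keys \<alpha>. Poly_Mapping.lookup \<alpha> i)"

definition Mon :: "nat \<Rightarrow> nat \<Rightarrow> (nat \<Rightarrow>\<^sub>0 nat) set" where
  "Mon n t = {\<alpha>. Poly_Mapping.keys \<alpha> \<subseteq> {..n} \<and> mdeg \<alpha> = t}"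

definition polyring :: "nat \<Rightarrow> 'k::field mpoly set" where
  "polyring n = {f. \<forall>\<alpha>\<in>Poly_Mapping.keys f. Poly_Mapping.keys \<alpha> \<subseteq> {..n}}"

definition graded_piece :: "nat \<Rightarrow> nat \<Rightarrow> 'k::field mpoly set" where
  "graded_piece n t = {f \<in> polyring n. \<forall>\<alpha>\<in>Poly_Mapping.keys f. mdeg \<alpha> = t}"

definition hcomp :: "nat \<Rightarrow> 'k::field mpoly \<Rightarrow> 'k mpoly" where
  "hcomp t f = Abs_poly_mapping (\<lambda>\<alpha>. if mdeg \<alpha> = t then Poly_Mapping.lookup f \<alpha> else 0)"

definition mscale :: "'k::field \<Rightarrow> 'k mpoly \<Rightarrow> 'k mpoly" where
  "mscale c f = Poly_Mapping.single 0 c * f"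

definition monom_poly :: "(nat \<Rightarrow>\<^sub>0 nat) \<Rightarrow> 'k::field mpoly" where
  "monom_poly \<alpha> = Poly_Mapping.single \<alpha> 1"

definition is_ideal :: "nat \<Rightarrow> 'k::field mpoly set \<Rightarrow> bool" where
  "is_ideal n J \<longleftrightarrow> J \<subseteq> polyring n \<and> 0 \<in> J \<and>
     (\<forall>f\<in>J. \<forall>g\<in>J. f + g \<in> J) \<and> (\<forall>f\<in>J. \<forall>g\<in>polyring n. g * f \<in> J)"

definition homogeneous_ideal :: "nat \<Rightarrow> 'k::field mpoly set \<Rightarrow> bool" where
  "homogeneous_ideal n J \<longleftrightarrow> is_ideal n J \<and> (\<forall>f\<in>J. \<forall>t. hcomp t f \<in> J)"

definition ideal_piece :: "nat \<Rightarrow> 'k::field mpoly set \<Rightarrow> nat \<Rightarrow> 'k mpoly set" where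
  "ideal_piece n J t = J \<inter> graded_piece n t"

text \<open>Degree reverse lexicographic order, x_0 > ... > x_n, on monomials of equal degree:
  alpha > beta iff the last nonzero entry of alpha - beta is negative.\<close>
definition drl_gt :: "(nat \<Rightarrow>\<^sub>0 nat) \<Rightarrow> (nat \<Rightarrow>\<^sub>0 nat) \<Rightarrow> bool" where
  "drl_gt \<alpha> \<beta> \<longleftrightarrow> (\<exists>i. Poly_Mapping.lookup \<alpha> i < Poly_Mapping.lookup \<beta> i \<and> (\<forall>j>i. Poly_Mapping.lookup \<alpha> j = Poly_Mapping.lookup \<beta> j))"

text \<open>M is an initial segment of degree t: the first l monomials of degree t, for some l
  (equivalently, a set of degree-t monomials closed under passing to larger ones).\<close>
definition initial_segment :: "nat \<Rightarrow> nat \<Rightarrow> (nat \<Rightarrow>\<^sub>0 nat) set \<Rightarrow> bool" where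
  "initial_segment n t M \<longleftrightarrow> M \<subseteq> Mon n t \<and>
     (\<forall>\<alpha>\<in>M. \<forall>\<beta>\<in>Mon n t. drl_gt \<beta> \<alpha> \<longrightarrow> \<beta> \<in> M)"

definition hilbert_fun :: "nat \<Rightarrow> 'k::field mpoly set \<Rightarrow> nat \<Rightarrow> nat" where
  "hilbert_fun n J t = vector_space.dim (mscale :: 'k \<Rightarrow> 'k mpoly \<Rightarrow> 'k mpoly) (graded_piece n t)
                       - vector_space.dim (mscale :: 'k \<Rightarrow> 'k mpoly \<Rightarrow> 'k mpoly) (ideal_piece n J t)"

definition is_hilbert_poly :: "nat \<Rightarrow> 'k::field mpoly set \<Rightarrow> rat poly \<Rightarrow> bool" where
  "is_hilbert_poly n J P \<longleftrightarrow>
     (\<forall>\<^sub>F t in sequentially. poly P (of_nat t) = of_nat (hilbert_fun n J t))"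

end

theory Submission
  imports Defs "HOL-Library.FuncSet"
begin

text \<open>Multiplying a nonzero element of J_m' by x_n^(m-m') gives an element of J_m all of
  whose monomials are divisible by x_n; since J_m is spanned by the monomials of the initial
  segment, one of those is divisible by x_n. In the reverse lexicographic order every
  degree-m monomial not divisible by x_n is larger, so all of them lie in J, and therefore
  so does every x_n-free monomial of degree at least m. Hence S_(t+1) = x_n S_t + J_(t+1) for
  t >= m: multiplication by x_n maps (S/J)_t onto (S/J)_(t+1), so the Hilbert function is
  non-increasing from degree m on and thus eventually constant.\<close>

lemma decreasing_nat_eventually_const:
  assumes "\<And>t. t \<ge> m \<Longrightarrow> h (Suc t) \<le> (h t :: nat)"
  shows "\<exists>N c. \<forall>t\<ge>N. h t = c"
proof -
  define c where "c = (LEAST v. \<exists>t\<ge>m. h t = v)"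
  obtain N where N: "N \<ge> m" "h N = c"
    using LeastI[of "\<lambda>v. \<exists>t\<ge>m. h t = v" "h m"] unfolding c_def by auto
  have "h t \<le> h N" if "t \<ge> N" for t
    using that
  proof (induction t rule: dec_induct)
    case (step k)
    then show ?case using assms[of k] N(1) by simp
  qed simp
  moreover have "c \<le> h t" if "t \<ge> m" for t
    unfolding c_def using that by (intro Least_le) auto
  ultimately have "\<forall>t\<ge>N. h t = c" using N by (metis order.trans le_antisym)
  then show ?thesis by blast
qed

context vector_space
begin

lemma dim_subset_finite_span:
  assumes "A \<subseteq> B" "B \<subseteq> span F" "finite F"
  shows "dim A \<le> dim B"
proof -
  obtain BA where BA: "BA \<subseteq> A" "independent BA" "card BA = dim A"
    using basis_exists by metis
  obtain BB where BB: "BA \<subseteq> BB" "BB \<subseteq> B" "independent BB" "B \<subseteq> span BB"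
    using maximal_independent_subset_extend[of BA B] BA assms(1) by blast
  have "finite BB" using independent_span_bound[OF assms(3) BB(3)] BB(2) assms(2) by blast
  moreover have "card BB = dim B" using basis_card_eq_dim BB by blast
  ultimately show ?thesis using card_mono[OF _ BB(1)] BA(3) by simp
qed

text \<open>Read as \<open>dim (S\<^sub>2/J\<^sub>2) \<le> dim (S\<^sub>1/J\<^sub>1)\<close>: the injection \<open>\<phi>\<close> induces a surjection
  \<open>S\<^sub>1/J\<^sub>1 \<rightarrow> S\<^sub>2/J\<^sub>2\<close>.\<close>
lemma dim_add_le_of_inj_cover:
  assumes S1: "S1 \<subseteq> span F1" "finite F1"
    and S2: "S2 \<subseteq> span F2" "finite F2"
    and J: "J1 \<subseteq> S1" "J2 \<subseteq> S2"
    and hom: "module_hom scale scale \<phi>" and inj: "inj \<phi>"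
    and img: "\<phi> ` J1 \<subseteq> J2"
    and cover: "S2 \<subseteq> span (\<phi> ` S1 \<union> J2)"
  shows "dim S2 + dim J1 \<le> dim S1 + dim J2"
proof -
  obtain BJ where BJ: "BJ \<subseteq> J1" "independent BJ" "card BJ = dim J1"
    using basis_exists by metis
  have "independent (\<phi> ` BJ)"
    using module_hom.independent_injective_image[OF hom BJ(2)] inj by (meson inj_on_subset subset_UNIV)
  then obtain B2 where B2: "\<phi> ` BJ \<subseteq> B2" "B2 \<subseteq> J2" "independent B2" "J2 \<subseteq> span B2"
    using maximal_independent_subset_extend[of "\<phi> ` BJ" J2] BJ(1) img by blast
  have fB2: "finite B2"
    using independent_span_bound[OF S2(2) B2(3)] B2(2) J(2) S2(1) by blast
  have card_BJ: "card (\<phi> ` BJ) = dim J1"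
    using BJ(3) inj card_image by (metis inj_on_subset subset_UNIV)
  define C where "C = B2 - \<phi> ` BJ"
  have card_C: "card C + dim J1 = dim J2"
    using card_Diff_subset[OF finite_subset[OF B2(1) fB2] B2(1)] card_mono[OF fB2 B2(1)]
      basis_card_eq_dim[OF B2(2,4,3)] card_BJ
    unfolding C_def by simp
  obtain D where D: "D \<subseteq> S1" "independent D" "S1 \<subseteq> span D" "card D = dim S1"
    using basis_exists by blast
  have fD: "finite D" using independent_span_bound[OF S1(2) D(2)] D(1) S1(1) by blast
  have "\<phi> ` S1 \<subseteq> span (\<phi> ` D)"
    using module_hom.spans_image[OF hom D(3)] .
  then have "\<phi> ` S1 \<subseteq> span (\<phi> ` D \<union> C)"
    using span_mono[of "\<phi> ` D" "\<phi> ` D \<union> C"] by blast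
  moreover have "B2 \<subseteq> \<phi> ` S1 \<union> C"
    using B2(1) BJ(1) J(1) unfolding C_def by blast
  ultimately have covered: "\<phi> ` S1 \<union> B2 \<subseteq> span (\<phi> ` D \<union> C)"
    using span_superset[of "\<phi> ` D \<union> C"] by blast
  then have "span B2 \<subseteq> span (\<phi> ` D \<union> C)"
    by (intro span_minimal[OF _ subspace_span]) blast
  then have "\<phi> ` S1 \<union> J2 \<subseteq> span (\<phi> ` D \<union> C)"
    using covered B2(4) by blast
  then have "S2 \<subseteq> span (\<phi> ` D \<union> C)"
    using cover span_minimal[OF _ subspace_span] by blast
  then have "dim S2 \<le> card (\<phi> ` D \<union> C)"
    using fD fB2 C_def by (intro dim_le_card) auto
  also have "\<dots> \<le> dim S1 + card C"
    using card_Un_le[of "\<phi> ` D" C] card_image_le[OF fD, of \<phi>] D(4) by simp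
  finally show ?thesis using card_C by simp
qed

end

lemma mdeg_eq_sum:
  "finite A \<Longrightarrow> Poly_Mapping.keys \<alpha> \<subseteq> A \<Longrightarrow> mdeg \<alpha> = (\<Sum>i\<in>A. Poly_Mapping.lookup \<alpha> i)"
  unfolding mdeg_def by (rule sum.mono_neutral_left) (auto simp: in_keys_iff)

lemma mdeg_add: "mdeg (\<alpha> + \<beta>) = mdeg \<alpha> + mdeg \<beta>"
proof -
  let ?A = "Poly_Mapping.keys \<alpha> \<union> Poly_Mapping.keys \<beta>"
  have "mdeg (\<alpha> + \<beta>) = (\<Sum>i\<in>?A. Poly_Mapping.lookup (\<alpha> + \<beta>) i)"
    using keys_add[of \<alpha> \<beta>] by (intro mdeg_eq_sum) auto
  also have "\<dots> = (\<Sum>i\<in>?A. Poly_Mapping.lookup \<alpha> i) + (\<Sum>i\<in>?A. Poly_Mapping.lookup \<beta> i)"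
    by (simp add: lookup_add sum.distrib)
  also have "\<dots> = mdeg \<alpha> + mdeg \<beta>"
    by (subst (1 2) mdeg_eq_sum[of ?A]) auto
  finally show ?thesis .
qed

lemma mdeg_single [simp]: "mdeg (Poly_Mapping.single i k) = k"
  by (subst mdeg_eq_sum[of "{i}"]) auto

lemma mdeg_zero [simp]: "mdeg 0 = 0"
  by (simp add: mdeg_def)

lemma lookup_le_mdeg: "Poly_Mapping.lookup \<alpha> i \<le> mdeg \<alpha>"
  by (cases "i \<in> Poly_Mapping.keys \<alpha>") (auto simp: mdeg_def in_keys_iff intro: member_le_sum)

lemma keys_add_nat:
  "Poly_Mapping.keys (\<alpha> + \<beta> :: 'a \<Rightarrow>\<^sub>0 nat) = Poly_Mapping.keys \<alpha> \<union> Poly_Mapping.keys \<beta>"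
  by (auto simp: in_keys_iff lookup_add)

lemma lookup_Mon_eq_0: "\<alpha> \<in> Mon n t \<Longrightarrow> n < i \<Longrightarrow> Poly_Mapping.lookup \<alpha> i = 0"
  unfolding Mon_def by (auto simp: in_keys_iff)

lemma single_one_add_diff:
  assumes "Poly_Mapping.lookup (\<alpha> :: 'a \<Rightarrow>\<^sub>0 nat) i \<ge> 1"
  shows "\<alpha> = Poly_Mapping.single i 1 + (\<alpha> - Poly_Mapping.single i 1)"
  by (rule poly_mapping_eqI) (use assms in \<open>auto simp: lookup_add lookup_minus lookup_single when_def\<close>)

lemma mdeg_ge_obtain_factor:
  assumes "m \<le> mdeg \<alpha>"
  obtains \<beta> \<gamma> where "\<alpha> = \<beta> + \<gamma>" "mdeg \<beta> = m"
  using assms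
proof (induction m arbitrary: thesis)
  case 0
  show ?case by (rule "0.prems"(1)[of 0 \<alpha>]) simp_all
next
  case (Suc m)
  obtain \<beta> \<gamma> where \<alpha>: "\<alpha> = \<beta> + \<gamma>" and \<beta>: "mdeg \<beta> = m"
    using Suc.IH Suc.prems(2) by (metis Suc_leD)
  then have "\<gamma> \<noteq> 0" using Suc.prems(2) mdeg_add[of \<beta> \<gamma>] by auto
  then obtain i where "Poly_Mapping.lookup \<gamma> i \<ge> 1"
    by (metis keys_eq_empty ex_in_conv in_keys_iff less_one not_le)
  then have "\<alpha> = (\<beta> + Poly_Mapping.single i 1) + (\<gamma> - Poly_Mapping.single i 1)"
    using \<alpha> single_one_add_diff by (metis add.assoc)
  then show ?case using Suc.prems(1) \<beta> by (simp add: mdeg_add)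
qed

lemma finite_Mon: "finite (Mon n t)"
proof -
  let ?f = "\<lambda>\<alpha>::nat \<Rightarrow>\<^sub>0 nat. restrict (Poly_Mapping.lookup \<alpha>) {..n}"
  have "inj_on ?f (Mon n t)"
  proof (rule inj_onI, rule poly_mapping_eqI)
    fix \<alpha> \<beta> i assume \<alpha>\<beta>: "\<alpha> \<in> Mon n t" "\<beta> \<in> Mon n t" "?f \<alpha> = ?f \<beta>"
    show "Poly_Mapping.lookup \<alpha> i = Poly_Mapping.lookup \<beta> i"
    proof (cases "i \<le> n")
      case True
      then show ?thesis using fun_cong[OF \<alpha>\<beta>(3), of i] by simp
    next
      case False
      then show ?thesis using \<alpha>\<beta>(1,2) by (simp add: lookup_Mon_eq_0)
    qed
  qed
  moreover have "?f ` Mon n t \<subseteq> PiE {..n} (\<lambda>_. {..t})"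
    using lookup_le_mdeg unfolding Mon_def by (auto simp: PiE_def)
  ultimately show ?thesis
    by (metis finite_imageD finite_subset finite_PiE finite_atMost)
qed

interpretation mscale: vector_space "mscale :: 'k::field \<Rightarrow> 'k mpoly \<Rightarrow> 'k mpoly"
  by unfold_locales (auto simp: mscale_def distrib_left distrib_right single_add mult.assoc mult_single)

lemma mscale_single: "mscale c (Poly_Mapping.single \<alpha> d) = Poly_Mapping.single \<alpha> (c * d)"
  by (simp add: mscale_def mult_single)

lemma keys_mscale_subset: "Poly_Mapping.keys (mscale c f) \<subseteq> Poly_Mapping.keys f"
  using keys_mult[of "Poly_Mapping.single 0 c" f] unfolding mscale_def
  by (auto split: if_splits)

lemma monom_poly_add: "monom_poly (\<alpha> + \<beta>) = (monom_poly \<alpha> * monom_poly \<beta> :: 'k::field mpoly)"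
  by (simp add: monom_poly_def mult_single)

lemma monom_poly_nonzero: "(monom_poly \<alpha> :: 'k::field mpoly) \<noteq> 0"
  by (metis monom_poly_def lookup_single_eq one_neq_zero lookup_zero)

lemma monom_poly_in_polyring:
  "Poly_Mapping.keys \<alpha> \<subseteq> {..n} \<Longrightarrow> (monom_poly \<alpha> :: 'k::field mpoly) \<in> polyring n"
  by (auto simp: polyring_def monom_poly_def)

lemma monom_poly_in_graded_piece:
  "\<alpha> \<in> Mon n t \<Longrightarrow> (monom_poly \<alpha> :: 'k::field mpoly) \<in> graded_piece n t"
  by (auto simp: graded_piece_def polyring_def Mon_def monom_poly_def)

lemma keys_monom_poly_mult:
  "Poly_Mapping.keys (monom_poly \<gamma> * (f :: 'k::field mpoly)) \<subseteq> (+) \<gamma> ` Poly_Mapping.keys f"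
  using keys_mult[of "monom_poly \<gamma>" f] by (auto simp: monom_poly_def)

lemma monom_poly_mult_graded_piece:
  assumes "f \<in> graded_piece n t" "Poly_Mapping.keys \<gamma> \<subseteq> {..n}"
  shows "monom_poly \<gamma> * (f :: 'k::field mpoly) \<in> graded_piece n (mdeg \<gamma> + t)"
  using assms keys_monom_poly_mult[of \<gamma> f]
  unfolding graded_piece_def polyring_def by (fastforce simp: keys_add_nat mdeg_add)

lemma graded_piece_subset_span_Mon:
  "graded_piece n t \<subseteq> mscale.span (monom_poly ` Mon n t :: 'k::field mpoly set)"
proof
  fix f :: "'k mpoly" assume f: "f \<in> graded_piece n t"
  have "f = (\<Sum>\<alpha>\<in>Poly_Mapping.keys f. mscale (Poly_Mapping.lookup f \<alpha>) (monom_poly \<alpha>))"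
    by (rule poly_mapping_eqI)
      (auto simp: lookup_sum monom_poly_def mscale_single lookup_single when_def in_keys_iff)
  also have "\<dots> \<in> mscale.span (monom_poly ` Mon n t)"
    using f unfolding graded_piece_def polyring_def Mon_def
    by (intro mscale.span_sum mscale.span_scale mscale.span_base) auto
  finally show "f \<in> mscale.span (monom_poly ` Mon n t)" .
qed

lemma keys_subset_if_in_span_monom_poly:
  assumes "f \<in> mscale.span (monom_poly ` A :: 'k::field mpoly set)"
  shows "Poly_Mapping.keys f \<subseteq> A"
proof -
  have "mscale.subspace {f :: 'k mpoly. Poly_Mapping.keys f \<subseteq> A}"
    unfolding mscale.subspace_def
    by (auto dest!: set_mp[OF keys_add] set_mp[OF keys_mscale_subset])
  with assms show ?thesis
    by (rule mscale.span_induct) (auto simp: monom_poly_def)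
qed

lemma ideal_mult_closed: "is_ideal n J \<Longrightarrow> f \<in> J \<Longrightarrow> g \<in> polyring n \<Longrightarrow> g * f \<in> J"
  unfolding is_ideal_def by blast

lemma initial_segment_contains_last_var_free:
  assumes M: "initial_segment n m M" and \<alpha>: "\<alpha> \<in> M" "Poly_Mapping.lookup \<alpha> n \<ge> 1"
    and \<beta>: "\<beta> \<in> Mon n m" "Poly_Mapping.lookup \<beta> n = 0"
  shows "\<beta> \<in> M"
proof -
  have "\<alpha> \<in> Mon n m" using M \<alpha>(1) unfolding initial_segment_def by blast
  then have "Poly_Mapping.lookup \<beta> j = Poly_Mapping.lookup \<alpha> j" if "j > n" for j
    using \<beta>(1) that by (simp add: lookup_Mon_eq_0)
  then have "drl_gt \<beta> \<alpha>"
    unfolding drl_gt_def using \<alpha>(2) \<beta>(2) by (intro exI[of _ n]) simp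
  then show ?thesis using M \<alpha>(1) \<beta>(1) unfolding initial_segment_def by blast
qed

lemma initial_segment_meets_last_var:
  fixes J :: "'k::field mpoly set"
  assumes J: "is_ideal n J" and M: "ideal_piece n J m = mscale.span (monom_poly ` M)"
    and "m' < m" and "ideal_piece n J m' \<noteq> {0}"
  shows "\<exists>\<alpha>\<in>M. Poly_Mapping.lookup \<alpha> n \<ge> 1"
proof -
  have "0 \<in> ideal_piece n J m'"
    using J unfolding is_ideal_def ideal_piece_def graded_piece_def polyring_def by auto
  then obtain f where f: "f \<in> ideal_piece n J m'" "f \<noteq> 0"
    using assms(4) by blast
  define \<gamma> where "\<gamma> = Poly_Mapping.single n (m - m')"
  define g where "g = monom_poly \<gamma> * f"
  have "g \<in> ideal_piece n J m"
    using f(1) ideal_mult_closed[OF J] monom_poly_in_polyring[of \<gamma> n]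
      monom_poly_mult_graded_piece[of f n m' \<gamma>] \<open>m' < m\<close>
    unfolding g_def \<gamma>_def ideal_piece_def by auto
  then have "Poly_Mapping.keys g \<subseteq> M"
    using M keys_subset_if_in_span_monom_poly by blast
  moreover obtain \<kappa> where \<kappa>: "\<kappa> \<in> Poly_Mapping.keys g"
    using f(2) monom_poly_nonzero unfolding g_def by (metis ex_in_conv keys_eq_empty no_zero_divisors)
  moreover have "Poly_Mapping.lookup \<kappa> n \<ge> 1"
    using keys_monom_poly_mult \<kappa> \<open>m' < m\<close> unfolding g_def \<gamma>_def by (fastforce simp: lookup_add)
  ultimately show ?thesis by blast
qed

lemma last_var_free_monom_poly_in_ideal:
  fixes J :: "'k::field mpoly set"
  assumes J: "is_ideal n J" and M: "ideal_piece n J m = mscale.span (monom_poly ` M)"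
    and var_free: "\<And>\<beta>. \<beta> \<in> Mon n m \<Longrightarrow> Poly_Mapping.lookup \<beta> n = 0 \<Longrightarrow> \<beta> \<in> M"
    and \<alpha>: "\<alpha> \<in> Mon n t" "t \<ge> m" "Poly_Mapping.lookup \<alpha> n = 0"
  shows "monom_poly \<alpha> \<in> J"
proof -
  obtain \<beta> \<gamma> where \<beta>\<gamma>: "\<alpha> = \<beta> + \<gamma>" "mdeg \<beta> = m"
    using mdeg_ge_obtain_factor[of m \<alpha>] \<alpha> unfolding Mon_def by auto
  then have "\<beta> \<in> Mon n m" "Poly_Mapping.keys \<gamma> \<subseteq> {..n}" "Poly_Mapping.lookup \<beta> n = 0"
    using \<alpha> unfolding Mon_def by (auto simp: keys_add_nat lookup_add)
  then have "monom_poly \<gamma> * monom_poly \<beta> \<in> J"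
    using var_free M ideal_mult_closed[OF J] monom_poly_in_polyring
    unfolding ideal_piece_def by (blast intro: mscale.span_base)
  then show ?thesis using \<beta>\<gamma>(1) by (simp add: monom_poly_add mult.commute)
qed

lemma hilbert_fun_Suc_le:
  fixes J :: "'k::field mpoly set"
  assumes J: "is_ideal n J"
    and var_free: "\<And>\<alpha>. \<alpha> \<in> Mon n (Suc t) \<Longrightarrow> Poly_Mapping.lookup \<alpha> n = 0 \<Longrightarrow> monom_poly \<alpha> \<in> J"
  shows "hilbert_fun n J (Suc t) \<le> hilbert_fun n J t"
proof -
  let ?x = "Poly_Mapping.single n 1 :: nat \<Rightarrow>\<^sub>0 nat"
  define \<phi> where "\<phi> = (\<lambda>h :: 'k mpoly. monom_poly ?x * h)"
  let ?S1 = "graded_piece n t :: 'k mpoly set" and ?S2 = "graded_piece n (Suc t) :: 'k mpoly set"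
  let ?J1 = "ideal_piece n J t" and ?J2 = "ideal_piece n J (Suc t)"
  have hom: "module_hom mscale mscale \<phi>"
    unfolding module_hom_iff using mscale.module_axioms
    by (auto simp: \<phi>_def distrib_left mscale_def mult.left_commute)
  have inj: "inj \<phi>"
    unfolding \<phi>_def using monom_poly_nonzero by (auto intro: injI)
  have "\<phi> ` ?J1 \<subseteq> ?J2"
    using ideal_mult_closed[OF J] monom_poly_in_polyring[of ?x n]
      monom_poly_mult_graded_piece[of _ n t ?x]
    unfolding \<phi>_def ideal_piece_def by auto
  moreover have "monom_poly \<alpha> \<in> mscale.span (\<phi> ` ?S1 \<union> ?J2)" if \<alpha>: "\<alpha> \<in> Mon n (Suc t)" for \<alpha>
  proof (cases "Poly_Mapping.lookup \<alpha> n \<ge> 1")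
    case True
    define \<beta> where "\<beta> = \<alpha> - ?x"
    have \<alpha>\<beta>: "\<alpha> = ?x + \<beta>" using single_one_add_diff[OF True] unfolding \<beta>_def .
    then have "\<beta> \<in> Mon n t" using \<alpha> unfolding Mon_def by (auto simp: keys_add_nat mdeg_add)
    moreover have "monom_poly \<alpha> = \<phi> (monom_poly \<beta>)" using \<alpha>\<beta> by (simp add: \<phi>_def monom_poly_add)
    ultimately show ?thesis by (auto intro: mscale.span_base monom_poly_in_graded_piece)
  next
    case False
    then show ?thesis using var_free \<alpha> monom_poly_in_graded_piece[OF \<alpha>]
      unfolding ideal_piece_def by (auto intro: mscale.span_base)
  qed
  then have "?S2 \<subseteq> mscale.span (\<phi> ` ?S1 \<union> ?J2)"
    using graded_piece_subset_span_Mon[of n "Suc t"] mscale.span_minimal[OF _ mscale.subspace_span]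
    by blast
  ultimately have "mscale.dim ?S2 + mscale.dim ?J1 \<le> mscale.dim ?S1 + mscale.dim ?J2"
    by (intro mscale.dim_add_le_of_inj_cover[OF graded_piece_subset_span_Mon _
          graded_piece_subset_span_Mon _ _ _ hom inj]) (auto simp: finite_Mon ideal_piece_def)
  moreover have "mscale.dim ?J1 \<le> mscale.dim ?S1"
    by (rule mscale.dim_subset_finite_span[OF _ graded_piece_subset_span_Mon])
      (auto simp: finite_Mon ideal_piece_def)
  ultimately show ?thesis unfolding hilbert_fun_def by linarith
qed

theorem mainTheorem13:
  fixes J :: "'k::field_char_0 mpoly set" and n m m' :: nat
  assumes alg_closed: "\<And>p :: 'k poly. degree p \<ge> 1 \<Longrightarrow> \<exists>x. poly p x = 0"
    and "n \<ge> 1"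
    and "homogeneous_ideal n J"
    and "m > 0"
    and "ideal_piece n J m \<noteq> {0}"
    and "\<exists>M. initial_segment n m M \<and>
           ideal_piece n J m = module.span (mscale :: 'k \<Rightarrow> 'k mpoly \<Rightarrow> 'k mpoly) (monom_poly ` M)"
    and "m' < m" and "ideal_piece n J m' \<noteq> {0}"
  shows "\<exists>P. is_hilbert_poly n J P \<and> degree P = 0"
proof -
  have J: "is_ideal n J" using assms(3) unfolding homogeneous_ideal_def by blast
  obtain M where M: "initial_segment n m M" "ideal_piece n J m = mscale.span (monom_poly ` M)"
    using assms(6) by blast
  obtain \<alpha> where "\<alpha> \<in> M" "Poly_Mapping.lookup \<alpha> n \<ge> 1"
    using initial_segment_meets_last_var[OF J M(2) assms(7,8)] by blast
  then have "\<beta> \<in> M" if "\<beta> \<in> Mon n m" "Poly_Mapping.lookup \<beta> n = 0" for \<beta>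
    using initial_segment_contains_last_var_free[OF M(1)] that by blast
  then have "hilbert_fun n J (Suc t) \<le> hilbert_fun n J t" if "t \<ge> m" for t
    using that
    by (intro hilbert_fun_Suc_le[OF J] last_var_free_monom_poly_in_ideal[OF J M(2), of _ "Suc t"]) auto
  then obtain N c where "\<forall>t\<ge>N. hilbert_fun n J t = c"
    using decreasing_nat_eventually_const by blast
  then have "is_hilbert_poly n J [:of_nat c:]"
    unfolding is_hilbert_poly_def eventually_sequentially by auto
  then show ?thesis by (intro exI[of _ "[:of_nat c:]"]) simp
qed

end
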